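(* Let $1<p<\infty$ and $W:\mathbb{M}^{3\times3}\to[0,+\infty]$ satisfy (H1)–(H5) below. Let $\Omega\subset\mathbb{R}^2$ be open and bounded, $\eta>0$, and $G:\overline\Omega\to\mathbb{M}^{3\times2}$ uniformly continuous with $|G^1(x)\wedge G^2(x)|\geq\eta$ for every $x\in\overline\Omega$. Then there exists $\beta=\beta(\eta,\|G\|_{L^\infty})$ such that $$\int_\Omega W_0(G(x))\,dx=\inf\Big\{\int_\Omega W(G(x)|\phi(x))\,dx:\ \phi\in C^\infty(\overline\Omega,\mathbb{R}^3),\ \det(G(x)|\phi(x))\geq\tfrac1\beta\text{ for }x\in\overline\Omega,\ \|\phi\|_{L^\infty}\leq\beta\Big\}.$$
   Context: Hypotheses: (H1) $W$ continuous as a $[0,+\infty]$-valued function; (H2) $W(RF)=W(F)$ for $R\in SO(3)$; (H3) $W(F)<\infty$ if $\det F>0$ and $W(F)=+\infty$ if $\det F\leq0$; (H4) $W(F)\geq C_1|F|^p-1/C_1$; (H5) for each $\delta>0$, $W(F)\leq c_\delta(1+|F|^p)$ when $\det F\geq\delta$. $W_0(A):=\inf_{\xi\in\mathbb{R}^3}W(A|\xi)$ for $A\in\mathbb{M}^{3\times2}$, where $(A|\xi)$ is the $3\times3$ matrix with columns $A^1,A^2,\xi$; $\wedge$ is the vector product. *)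

theory Defs
  imports "HOL-Analysis.Analysis"
begin

definition augm :: "real^2^3 \<Rightarrow> real^3 \<Rightarrow> real^3^3" where
  "augm A \<xi> = (\<chi> i j. if j = 1 then A$i$1 else if j = 2 then A$i$2 else \<xi>$i)"

definition W0 :: "(real^3^3 \<Rightarrow> ennreal) \<Rightarrow> real^2^3 \<Rightarrow> ennreal" where
  "W0 W A = (INF \<xi>. W (augm A \<xi>))"

fun Ck :: "nat \<Rightarrow> (real^2 \<Rightarrow> real^3) \<Rightarrow> bool" where
  "Ck 0 f = continuous_on UNIV f"
| "Ck (Suc k) f = (\<exists>f'. (\<forall>x. (f has_derivative f' x) (at x)) \<and>
                        (\<forall>i. Ck k (\<lambda>x. f' x (axis i 1))))"

definition smooth :: "(real^2 \<Rightarrow> real^3) \<Rightarrow> bool" where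
  "smooth f \<longleftrightarrow> (\<forall>k. Ck k f)"

end

theory Submission
  imports Defs
begin

text \<open>
  One inequality is pointwise: \<open>W\<^sub>0(A) \<le> W(A|\<xi>)\<close> for every \<open>\<xi>\<close>. For the other one fix
  \<open>\<epsilon> > 0\<close>. Testing \<open>W\<^sub>0\<close> with \<open>\<xi> = G\<^sup>1 \<wedge> G\<^sup>2\<close> bounds \<open>W\<^sub>0(G)\<close> by a constant
  \<open>K\<close> depending only on \<open>\<eta>\<close> and \<open>\<parallel>G\<parallel>\<^sub>\<infinity>\<close>, and (H1), (H3), (H4) make \<open>{W \<le> K + 1}\<close>
  a compact set of matrices with norm \<open>\<le> R\<close> and determinant \<open>\<ge> \<delta>\<close>. A countable dense set of
  vectors yields a Borel \<open>\<epsilon>\<close>-minimiser \<open>\<phi>\<close> of \<open>\<xi> \<mapsto> W(G|\<xi>)\<close>, which hence satisfies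
  \<open>|\<phi>| \<le> R\<close> and \<open>\<phi> \<cdot> (G\<^sup>1 \<wedge> G\<^sup>2) \<ge> \<delta>\<close>. By Lusin's theorem \<open>\<phi>\<close> is an a.e. limit
  of continuous fields; projecting them onto the ball of radius \<open>R\<close> and onto the half-space
  \<open>{\<xi>. \<xi> \<cdot> (G\<^sup>1 \<wedge> G\<^sup>2) \<ge> \<delta>}\<close>, and then approximating uniformly by polynomials
  (Stone-Weierstrass), gives smooth admissible fields with determinant \<open>\<ge> \<delta>/2\<close> and
  uniformly bounded norm that converge to \<open>\<phi>\<close> a.e. On such values \<open>W\<close> is bounded, so by
  bounded convergence their energies tend to \<open>\<integral> W(G|\<phi>) \<le> \<integral> W\<^sub>0(G) + \<epsilon>|\<Omega>|\<close>.
\<close>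

definition cross_columns :: "real^2^3 \<Rightarrow> real^3" where
  "cross_columns A = cross3 (column 1 A) (column 2 A)"

lemma det_augm: "det (augm A \<xi>) = \<xi> \<bullet> cross_columns A"
  unfolding augm_def cross_columns_def
  by (simp add: det_3 cross3_def inner_vec_def sum_3 column_def algebra_simps)

lemma norm_vec_power2: "(norm x)\<^sup>2 = (\<Sum>i\<in>UNIV. (norm (x $ i))\<^sup>2)"
  by (simp add: norm_vec_def L2_set_def sum_nonneg)

lemma norm_augm_power2: "(norm (augm A \<xi>))\<^sup>2 = (norm A)\<^sup>2 + (norm \<xi>)\<^sup>2"
proof -
  have "(norm (augm A \<xi> $ i))\<^sup>2 = (norm (A $ i))\<^sup>2 + (norm (\<xi> $ i))\<^sup>2" for i
    by (simp add: norm_vec_power2 augm_def sum_2 sum_3)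
  then show ?thesis
    by (simp add: norm_vec_power2[of "augm A \<xi>"] norm_vec_power2[of A] norm_vec_power2[of \<xi>]
        sum.distrib)
qed

lemma norm_le_norm_augm: "norm \<xi> \<le> norm (augm A \<xi>)"
  by (rule power2_le_imp_le) (simp_all add: norm_augm_power2)

lemma norm_augm_le: "norm (augm A \<xi>) \<le> norm A + norm \<xi>"
  by (rule power2_le_imp_le) (simp_all add: norm_augm_power2 power2_sum)

lemma continuous_on_column [continuous_intros]:
  "continuous_on S f \<Longrightarrow> continuous_on S (\<lambda>x. column j (f x :: real^'m^'n))"
  unfolding column_def by (intro continuous_on_vec_lambda continuous_on_component)

lemma continuous_on_cross_columns [continuous_intros]:
  fixes f :: "'a::t2_space \<Rightarrow> real^2^3"
  shows "continuous_on S f \<Longrightarrow> continuous_on S (\<lambda>x. cross_columns (f x))"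
  unfolding cross_columns_def by (intro continuous_on_cross continuous_on_column)

lemma continuous_on_augm [continuous_intros]:
  "continuous_on S f \<Longrightarrow> continuous_on S g \<Longrightarrow> continuous_on S (\<lambda>x. augm (f x) (g x))"
  unfolding augm_def
proof (intro continuous_on_vec_lambda)
  show "continuous_on S (\<lambda>x. if j = 1 then f x $ i $ 1 else if j = 2 then f x $ i $ 2 else g x $ i)"
    if "continuous_on S f" "continuous_on S g" for i j
    using that by (cases "j = 1"; cases "j = 2") (simp_all add: continuous_on_component)
qed

lemma continuous_on_det [continuous_intros]:
  "continuous_on S f \<Longrightarrow> continuous_on S (\<lambda>x. det (f x :: real^'n^'n))"
  unfolding det_def by (intro continuous_intros)

lemma real_polynomial_function_has_derivative:
  assumes "real_polynomial_function p"
  obtains p' where "\<And>x. (p has_derivative p' x) (at x)"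
    and "\<And>v. real_polynomial_function (\<lambda>x. p' x v)"
proof -
  have "\<exists>p'. (\<forall>x. (p has_derivative p' x) (at x)) \<and> (\<forall>v. real_polynomial_function (\<lambda>x. p' x v))"
    using assms
  proof induction
    case (linear f)
    then show ?case
      by (intro exI[of _ "\<lambda>x. f"]) (auto intro: bounded_linear_imp_has_derivative)
  next
    case (const c)
    show ?case
      by (intro exI[of _ "\<lambda>x v. 0"]) auto
  next
    case (add f g)
    then obtain f' g' where "\<And>x. (f has_derivative f' x) (at x)" "\<And>v. real_polynomial_function (\<lambda>x. f' x v)"
      "\<And>x. (g has_derivative g' x) (at x)" "\<And>v. real_polynomial_function (\<lambda>x. g' x v)"
      by blast
    then show ?case
      by (intro exI[of _ "\<lambda>x v. f' x v + g' x v"]) (auto intro!: derivative_eq_intros)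
  next
    case (mult f g)
    then obtain f' g' where "\<And>x. (f has_derivative f' x) (at x)" "\<And>v. real_polynomial_function (\<lambda>x. f' x v)"
      "\<And>x. (g has_derivative g' x) (at x)" "\<And>v. real_polynomial_function (\<lambda>x. g' x v)"
      by blast
    with mult.hyps show ?case
      by (intro exI[of _ "\<lambda>x v. f x * g' x v + f' x v * g x"] conjI allI has_derivative_mult
          real_polynomial_function.intros(3,4))
  qed
  then show ?thesis
    using that by blast
qed

lemma polynomial_function_has_derivative:
  fixes f :: "'a::real_normed_vector \<Rightarrow> 'b::euclidean_space"
  assumes "polynomial_function f"
  obtains f' where "\<And>x. (f has_derivative f' x) (at x)"
    and "\<And>v. polynomial_function (\<lambda>x. f' x v)"
proof -
  have "\<forall>b. \<exists>p'. b \<in> Basis \<longrightarrow> (\<forall>x. ((\<lambda>x. f x \<bullet> b) has_derivative p' x) (at x))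
      \<and> (\<forall>v. real_polynomial_function (\<lambda>x. p' x v))"
    using assms real_polynomial_function_has_derivative
    unfolding polynomial_function_iff_Basis_inner by metis
  then obtain p' where p': "\<And>b x. b \<in> Basis \<Longrightarrow> ((\<lambda>x. f x \<bullet> b) has_derivative p' b x) (at x)"
    "\<And>b v. b \<in> Basis \<Longrightarrow> real_polynomial_function (\<lambda>x. p' b x v)"
    by metis
  have "(f has_derivative (\<lambda>v. \<Sum>b\<in>Basis. p' b x v *\<^sub>R b)) (at x)" for x
  proof -
    have "f = (\<lambda>x. \<Sum>b\<in>Basis. (f x \<bullet> b) *\<^sub>R b)"
      by (simp add: euclidean_representation)
    then show ?thesis
      by (subst \<open>f = _\<close>) (intro has_derivative_sum has_derivative_scaleR_left p')
  qed
  moreover have "polynomial_function (\<lambda>x. \<Sum>b\<in>Basis. p' b x v *\<^sub>R b)" for v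
    using p'(2) by (intro polynomial_function_sum polynomial_function_mult)
      (auto simp: real_polynomial_function_eq)
  ultimately show ?thesis
    by (rule that)
qed

lemma polynomial_function_Ck: "polynomial_function f \<Longrightarrow> Ck k f"
proof (induction k arbitrary: f)
  case 0
  then show ?case
    by (simp add: continuous_on_polymonial_function)
next
  case (Suc k)
  obtain f' where "\<And>x. (f has_derivative f' x) (at x)" "\<And>v. polynomial_function (\<lambda>x. f' x v)"
    using polynomial_function_has_derivative[OF Suc.prems] by blast
  with Suc.IH show ?case
    by auto
qed

lemma polynomial_function_smooth: "polynomial_function f \<Longrightarrow> smooth f"
  unfolding smooth_def by (blast intro: polynomial_function_Ck)

lemma obtain_dense_sequence:
  obtains d :: "nat \<Rightarrow> 'a::second_countable_topology" where "closure (range d) = UNIV"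
proof -
  obtain D :: "'a set" where D: "countable D" "\<And>X. open X \<Longrightarrow> X \<noteq> {} \<Longrightarrow> \<exists>d\<in>D. d \<in> X"
    using countable_dense_setE by blast
  have "closure D = UNIV"
    using D(2)[of "- closure D"] closure_subset by auto
  moreover have "D \<noteq> {}"
    using D(2)[of UNIV] by auto
  ultimately show ?thesis
    using that range_from_nat_into[OF _ D(1)] by metis
qed

lemma INF_continuous_dense_range:
  fixes f :: "'a::first_countable_topology \<Rightarrow> 'b::{complete_linorder, linorder_topology}"
  assumes f: "continuous_on UNIV f" and d: "closure (range d) = UNIV"
  shows "(INF x. f x) = (INF k. f (d k))"
proof (rule antisym)
  show "(INF x. f x) \<le> (INF k. f (d k))"
    by (rule INF_mono) auto
  show "(INF k. f (d k)) \<le> (INF x. f x)"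
  proof (rule INF_greatest)
    fix x
    obtain s where s: "\<And>n. s n \<in> range d" "s \<longlonglongrightarrow> x"
      using closure_sequential[of x "range d"] d by auto
    have "(\<lambda>n. f (s n)) \<longlonglongrightarrow> f x"
      using continuous_on_tendsto_compose[OF f s(2)] by simp
    moreover have "\<forall>n. (INF k. f (d k)) \<le> f (s n)"
      using s(1) by (metis INF_lower UNIV_I rangeE)
    ultimately show "(INF k. f (d k)) \<le> f x"
      by (intro LIMSEQ_le_const) auto
  qed
qed

context
  fixes f :: "'a \<Rightarrow> 'b::second_countable_topology \<Rightarrow> ennreal" and M :: "'a measure"
  assumes f_measurable: "\<And>\<xi>. (\<lambda>x. f x \<xi>) \<in> borel_measurable M"
    and f_continuous: "\<And>x. continuous_on UNIV (f x)"
begin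

lemma borel_measurable_INF_continuous: "(\<lambda>x. INF \<xi>. f x \<xi>) \<in> borel_measurable M"
proof -
  obtain d :: "nat \<Rightarrow> 'b" where d: "closure (range d) = UNIV"
    by (rule obtain_dense_sequence)
  have "(\<lambda>x. INF \<xi>. f x \<xi>) = (\<lambda>x. INF k. f x (d k))"
    using INF_continuous_dense_range[OF f_continuous d] by simp
  with f_measurable show ?thesis
    by simp
qed

lemma obtain_measurable_almost_minimizer:
  assumes "\<epsilon> > 0"
  obtains \<phi> where "\<phi> \<in> borel_measurable M" "(\<lambda>x. f x (\<phi> x)) \<in> borel_measurable M"
    and "\<And>x. (INF \<xi>. f x \<xi>) < \<infinity> \<Longrightarrow> f x (\<phi> x) < (INF \<xi>. f x \<xi>) + ennreal \<epsilon>"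
proof -
  obtain d :: "nat \<Rightarrow> 'b" where d: "closure (range d) = UNIV"
    by (rule obtain_dense_sequence)
  define good where "good k x \<longleftrightarrow> f x (d k) < (INF \<xi>. f x \<xi>) + ennreal \<epsilon>" for k x
  define k where "k x = (LEAST k. good k x)" for x
  have [measurable]: "Measurable.pred M (good k)" for k
    unfolding good_def using f_measurable borel_measurable_INF_continuous by measurable
  have k_measurable [measurable]: "k \<in> M \<rightarrow>\<^sub>M count_space UNIV"
    unfolding k_def by measurable
  have "good (k x) x" if "(INF \<xi>. f x \<xi>) < \<infinity>" for x
  proof -
    have "(INF n. f x (d n)) = (INF \<xi>. f x \<xi>)"
      by (rule INF_continuous_dense_range[OF f_continuous d, symmetric])
    also have "\<dots> < (INF \<xi>. f x \<xi>) + ennreal \<epsilon>"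
      using that \<open>\<epsilon> > 0\<close>
      by (cases "INF \<xi>. f x \<xi>")
        (auto simp: ennreal_plus[symmetric] ennreal_less_iff simp del: ennreal_plus)
    finally have "(INF n. f x (d n)) < (INF \<xi>. f x \<xi>) + ennreal \<epsilon>" .
    then have "\<exists>n. good n x"
      unfolding good_def INF_less_iff by auto
    then show ?thesis
      unfolding k_def by (rule LeastI_ex)
  qed
  moreover have "(\<lambda>x. d (k x)) \<in> borel_measurable M"
    by (rule measurable_compose_countable[where f = "\<lambda>i x. d i"]) simp_all
  moreover have "(\<lambda>x. f x (d (k x))) \<in> borel_measurable M"
    by (rule measurable_compose_countable[where f = "\<lambda>i x. f x (d i)"]) (simp_all add: f_measurable)
  ultimately show ?thesis
    using that[of "\<lambda>x. d (k x)"] unfolding good_def by blast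
qed

end

definition ball_proj :: "real \<Rightarrow> 'a::real_normed_vector \<Rightarrow> 'a" where
  "ball_proj R \<xi> = (R / max R (norm \<xi>)) *\<^sub>R \<xi>"

definition halfspace_proj :: "real \<Rightarrow> 'a::real_inner \<Rightarrow> 'a \<Rightarrow> 'a" where
  "halfspace_proj \<delta> n \<xi> = \<xi> + (max 0 (\<delta> - \<xi> \<bullet> n) / (n \<bullet> n)) *\<^sub>R n"

lemma norm_ball_proj_le: "R > 0 \<Longrightarrow> norm (ball_proj R \<xi>) \<le> R"
  by (simp add: ball_proj_def max_def divide_le_eq)

lemma ball_proj_eq_self: "R > 0 \<Longrightarrow> norm \<xi> \<le> R \<Longrightarrow> ball_proj R \<xi> = \<xi>"
  by (simp add: ball_proj_def max_def)

lemma continuous_on_ball_proj [continuous_intros]: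
  "R > 0 \<Longrightarrow> continuous_on S f \<Longrightarrow> continuous_on S (\<lambda>x. ball_proj R (f x))"
  unfolding ball_proj_def by (intro continuous_intros) auto

lemma inner_halfspace_proj_ge: "n \<noteq> 0 \<Longrightarrow> \<delta> \<le> halfspace_proj \<delta> n \<xi> \<bullet> n"
  by (simp add: halfspace_proj_def inner_add_left)

lemma halfspace_proj_eq_self: "\<delta> \<le> \<xi> \<bullet> n \<Longrightarrow> halfspace_proj \<delta> n \<xi> = \<xi>"
  by (simp add: halfspace_proj_def)

lemma norm_halfspace_proj_le:
  assumes "n \<noteq> 0" "\<delta> > 0"
  shows "norm (halfspace_proj \<delta> n \<xi>) \<le> 2 * norm \<xi> + \<delta> / norm n"
proof -
  have n: "norm n > 0" "n \<bullet> n = norm n * norm n"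
    using assms(1) by (simp_all add: power2_norm_eq_inner[symmetric] power2_eq_square)
  have "norm ((max 0 (\<delta> - \<xi> \<bullet> n) / (n \<bullet> n)) *\<^sub>R n) = max 0 (\<delta> - \<xi> \<bullet> n) / norm n"
    using n by simp
  also have "\<dots> \<le> (\<delta> + norm \<xi> * norm n) / norm n"
    using norm_cauchy_schwarz[of "-\<xi>" n] assms(2) n(1) by (intro divide_right_mono) auto
  also have "\<dots> = norm \<xi> + \<delta> / norm n"
    using n(1) by (simp add: field_simps)
  finally show ?thesis
    unfolding halfspace_proj_def
    using norm_triangle_ineq[of \<xi> "(max 0 (\<delta> - \<xi> \<bullet> n) / (n \<bullet> n)) *\<^sub>R n"] by linarith
qed

lemma continuous_on_halfspace_proj [continuous_intros]:
  "continuous_on S n \<Longrightarrow> continuous_on S f \<Longrightarrow> (\<And>x. x \<in> S \<Longrightarrow> n x \<noteq> 0) \<Longrightarrow>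
    continuous_on S (\<lambda>x. halfspace_proj \<delta> (n x) (f x))"
  unfolding halfspace_proj_def by (intro continuous_intros) auto

lemma obtain_polynomial_approximation_sequence:
  fixes g :: "nat \<Rightarrow> 'a::euclidean_space \<Rightarrow> 'b::euclidean_space"
  assumes "compact K" "\<And>k. continuous_on K (g k)" "e > 0"
  obtains P where "\<And>k. polynomial_function (P k)"
    and "\<And>k x. x \<in> K \<Longrightarrow> norm (g k x - P k x) < e"
    and "\<And>x l. x \<in> K \<Longrightarrow> (\<lambda>k. g k x) \<longlonglongrightarrow> l \<Longrightarrow> (\<lambda>k. P k x) \<longlonglongrightarrow> l"
proof -
  have "\<exists>P. polynomial_function P \<and> (\<forall>x\<in>K. norm (g k x - P x) < e / real (Suc k))" for k
    using assms(3) by (intro Stone_Weierstrass_polynomial_function assms(1,2)) simp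
  then obtain P where "\<forall>k. polynomial_function (P k) \<and> (\<forall>x\<in>K. norm (g k x - P k x) < e / real (Suc k))"
    by metis
  then have P: "\<And>k. polynomial_function (P k)"
    and err: "\<And>k x. x \<in> K \<Longrightarrow> norm (g k x - P k x) < e / real (Suc k)"
    by simp_all
  show ?thesis
  proof (rule that[OF P])
    show "norm (g k x - P k x) < e" if "x \<in> K" for k x
    proof -
      have "e / real (Suc k) \<le> e"
        using assms(3) by (simp add: divide_le_eq)
      then show ?thesis
        using err[OF that, of k] by linarith
    qed
    show "(\<lambda>k. P k x) \<longlonglongrightarrow> l" if "x \<in> K" "(\<lambda>k. g k x) \<longlonglongrightarrow> l" for x l
    proof -
      have "\<forall>k. norm (g k x - P k x) \<le> e / real (Suc k)"
        using err[OF that(1)] by (simp add: less_imp_le)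
      then have "(\<lambda>k. g k x - P k x) \<longlonglongrightarrow> 0"
        by (rule Lim_null_comparison[OF always_eventually LIMSEQ_Suc[OF lim_const_over_n]])
      from tendsto_diff[OF that(2) this] show ?thesis
        by simp
    qed
  qed
qed

lemma obtain_continuous_approximation_in_halfspaces:
  fixes \<phi> n :: "'a::euclidean_space \<Rightarrow> 'b::euclidean_space"
  assumes \<Omega>: "\<Omega> \<in> sets lebesgue" and \<phi>: "\<phi> \<in> borel_measurable lebesgue"
    and n: "continuous_on (closure \<Omega>) n" "\<And>x. x \<in> closure \<Omega> \<Longrightarrow> \<eta> \<le> norm (n x)"
    and pos: "\<eta> > 0" "R > 0" "\<delta> > 0"
    and \<phi>_bounds: "\<And>x. x \<in> \<Omega> \<Longrightarrow> norm (\<phi> x) \<le> R" "\<And>x. x \<in> \<Omega> \<Longrightarrow> \<delta> \<le> \<phi> x \<bullet> n x"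
  obtains F where "\<And>k. continuous_on (closure \<Omega>) (F k)"
    and "\<And>k x. x \<in> closure \<Omega> \<Longrightarrow> \<delta> \<le> F k x \<bullet> n x"
    and "\<And>k x. x \<in> closure \<Omega> \<Longrightarrow> norm (F k x) \<le> 2 * R + \<delta> / \<eta>"
    and "AE x in lborel. x \<in> \<Omega> \<longrightarrow> (\<lambda>k. F k x) \<longlonglongrightarrow> \<phi> x"
proof -
  obtain N :: "'a set" and g :: "nat \<Rightarrow> 'a \<Rightarrow> 'b"
    where N: "negligible N" and g: "\<And>k. continuous_on UNIV (g k)"
    and lim_g: "\<And>x. x \<notin> N \<Longrightarrow> (\<lambda>k. g k x) \<longlonglongrightarrow> (if x \<in> \<Omega> then \<phi> x else 0)"
    using lebesgue_measurable_imp_measurable_on[OF \<phi> \<Omega>] unfolding measurable_on_def by blast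
  \<comment> \<open>The projections enforce the constraints and fix \<open>\<phi> x\<close>, which satisfies them already.\<close>
  define proj where "proj x \<xi> = halfspace_proj \<delta> (n x) (ball_proj R \<xi>)" for x \<xi>
  have n_nonzero: "n x \<noteq> 0" if "x \<in> closure \<Omega>" for x
    using n(2)[OF that] pos(1) by auto
  have conv: "(\<lambda>k. proj x (g k x)) \<longlonglongrightarrow> \<phi> x" if "x \<notin> N" "x \<in> \<Omega>" for x
  proof -
    have "continuous_on UNIV (proj x)"
      unfolding proj_def using n_nonzero[of x] closure_subset \<open>x \<in> \<Omega>\<close> pos(2)
      by (intro continuous_intros) auto
    moreover have "(\<lambda>k. g k x) \<longlonglongrightarrow> \<phi> x"
      using lim_g[OF that(1)] that(2) by simp
    ultimately have "(\<lambda>k. proj x (g k x)) \<longlonglongrightarrow> proj x (\<phi> x)"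
      by (rule continuous_on_tendsto_compose) auto
    moreover have "proj x (\<phi> x) = \<phi> x"
      unfolding proj_def using \<phi>_bounds[OF that(2)] pos(2)
      by (simp add: ball_proj_eq_self halfspace_proj_eq_self)
    ultimately show ?thesis
      by simp
  qed
  have "continuous_on (closure \<Omega>) (\<lambda>x. proj x (g k x))" for k
    unfolding proj_def
    by (intro continuous_intros pos continuous_on_subset[OF g] n n_nonzero) auto
  moreover have "\<delta> \<le> proj x \<xi> \<bullet> n x" if "x \<in> closure \<Omega>" for x \<xi>
    unfolding proj_def by (rule inner_halfspace_proj_ge[OF n_nonzero[OF that]])
  moreover have "norm (proj x \<xi>) \<le> 2 * R + \<delta> / \<eta>" if "x \<in> closure \<Omega>" for x \<xi>
  proof -
    have "norm (proj x \<xi>) \<le> 2 * norm (ball_proj R \<xi>) + \<delta> / norm (n x)"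
      unfolding proj_def by (rule norm_halfspace_proj_le[OF n_nonzero[OF that] pos(3)])
    also have "\<dots> \<le> 2 * R + \<delta> / \<eta>"
      using norm_ball_proj_le[OF pos(2), of \<xi>] n(2)[OF that] pos
      by (intro add_mono divide_left_mono) (auto simp: zero_less_mult_iff)
    finally show ?thesis .
  qed
  moreover have "AE x in lborel. x \<in> \<Omega> \<longrightarrow> (\<lambda>k. proj x (g k x)) \<longlonglongrightarrow> \<phi> x"
  proof -
    have "AE x in lborel. x \<notin> N"
      using N AE_not_in[of N lebesgue] by (simp add: negligible_iff_null_sets AE_completion_iff)
    then show ?thesis
      by eventually_elim (use conv in blast)
  qed
  ultimately show ?thesis
    by (rule that)
qed

lemma obtain_polynomial_approximation_in_halfspaces:
  fixes \<phi> n :: "'a::euclidean_space \<Rightarrow> 'b::euclidean_space"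
  assumes \<Omega>: "\<Omega> \<in> sets lebesgue" "bounded \<Omega>" and \<phi>: "\<phi> \<in> borel_measurable lebesgue"
    and n: "continuous_on (closure \<Omega>) n" "\<And>x. x \<in> closure \<Omega> \<Longrightarrow> \<eta> \<le> norm (n x)"
    and pos: "\<eta> > 0" "R > 0" "\<delta> > 0"
    and \<phi>_bounds: "\<And>x. x \<in> \<Omega> \<Longrightarrow> norm (\<phi> x) \<le> R" "\<And>x. x \<in> \<Omega> \<Longrightarrow> \<delta> \<le> \<phi> x \<bullet> n x"
  obtains P where "\<And>k. polynomial_function (P k)"
    and "\<And>k x. x \<in> closure \<Omega> \<Longrightarrow> \<delta> / 2 \<le> P k x \<bullet> n x"
    and "\<And>k x. x \<in> closure \<Omega> \<Longrightarrow> norm (P k x) \<le> 2 * R + \<delta> / \<eta> + 1"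
    and "AE x in lborel. x \<in> \<Omega> \<longrightarrow> (\<lambda>k. P k x) \<longlonglongrightarrow> \<phi> x"
proof -
  obtain F :: "nat \<Rightarrow> 'a \<Rightarrow> 'b" where F: "\<And>k. continuous_on (closure \<Omega>) (F k)"
    "\<And>k x. x \<in> closure \<Omega> \<Longrightarrow> \<delta> \<le> F k x \<bullet> n x"
    "\<And>k x. x \<in> closure \<Omega> \<Longrightarrow> norm (F k x) \<le> 2 * R + \<delta> / \<eta>"
    "AE x in lborel. x \<in> \<Omega> \<longrightarrow> (\<lambda>k. F k x) \<longlonglongrightarrow> \<phi> x"
    using obtain_continuous_approximation_in_halfspaces[OF \<Omega>(1) \<phi> n pos \<phi>_bounds] by auto
  have K: "compact (closure \<Omega>)"
    using \<Omega>(2) by (simp add: compact_closure)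
  obtain N where N: "N > 0" "\<And>x. x \<in> closure \<Omega> \<Longrightarrow> norm (n x) \<le> N"
    using compact_imp_bounded[OF compact_continuous_image[OF n(1) K]] by (auto simp: bounded_pos)
  define e where "e = min 1 (\<delta> / (2 * N))"
  have e: "e > 0" "e \<le> 1" "e * N \<le> \<delta> / 2"
    using pos N by (auto simp: e_def min_def field_simps)
  obtain P :: "nat \<Rightarrow> 'a \<Rightarrow> 'b" where P: "\<And>k. polynomial_function (P k)"
    and err: "\<And>k x. x \<in> closure \<Omega> \<Longrightarrow> norm (F k x - P k x) < e"
    and lim: "\<And>x l. x \<in> closure \<Omega> \<Longrightarrow> (\<lambda>k. F k x) \<longlonglongrightarrow> l \<Longrightarrow> (\<lambda>k. P k x) \<longlonglongrightarrow> l"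
    using obtain_polynomial_approximation_sequence[of "closure \<Omega>" F e, OF K F(1) e(1)] by auto
  show ?thesis
  proof (rule that[OF P])
    fix k x
    assume x: "x \<in> closure \<Omega>"
    have "(F k x - P k x) \<bullet> n x \<le> norm (F k x - P k x) * norm (n x)"
      by (rule norm_cauchy_schwarz)
    also have "\<dots> \<le> e * N"
      using err[OF x, of k] N(2)[OF x] e by (intro mult_mono) auto
    finally show "\<delta> / 2 \<le> P k x \<bullet> n x"
      using F(2)[OF x, of k] e(3) by (simp add: inner_diff_left)
    show "norm (P k x) \<le> 2 * R + \<delta> / \<eta> + 1"
      using F(3)[OF x, of k] err[OF x, of k] e(2) norm_triangle_sub[of "P k x" "F k x"]
      by (simp add: norm_minus_commute)
  next
    show "AE x in lborel. x \<in> \<Omega> \<longrightarrow> (\<lambda>k. P k x) \<longlonglongrightarrow> \<phi> x"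
      using F(4) by eventually_elim (use lim closure_subset in blast)
  qed
qed

lemma nn_integral_indicator_bounded_convergence:
  assumes \<Omega>: "\<Omega> \<in> sets M" "emeasure M \<Omega> < \<infinity>"
    and u: "\<And>k. u k \<in> borel_measurable M" and v: "v \<in> borel_measurable M"
    and bound: "\<And>k x. x \<in> \<Omega> \<Longrightarrow> u k x \<le> ennreal B"
    and lim: "AE x in M. x \<in> \<Omega> \<longrightarrow> (\<lambda>k. u k x) \<longlonglongrightarrow> v x"
  shows "(\<lambda>k. \<integral>\<^sup>+ x. u k x * indicator \<Omega> x \<partial>M) \<longlonglongrightarrow> (\<integral>\<^sup>+ x. v x * indicator \<Omega> x \<partial>M)"
proof (rule nn_integral_dominated_convergence[where w = "\<lambda>x. ennreal B * indicator \<Omega> x"])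
  show "AE x in M. u k x * indicator \<Omega> x \<le> ennreal B * indicator \<Omega> x" for k
    using bound by (intro AE_I2) (simp add: indicator_def)
  show "(\<integral>\<^sup>+ x. ennreal B * indicator \<Omega> x \<partial>M) < \<infinity>"
    using \<Omega> by (simp add: nn_integral_cmult_indicator ennreal_mult_less_top)
  show "AE x in M. (\<lambda>k. u k x * indicator \<Omega> x) \<longlonglongrightarrow> v x * indicator \<Omega> x"
    using lim by eventually_elim (simp add: indicator_def)
  show "(\<lambda>x. u k x * indicator \<Omega> x) \<in> borel_measurable M" for k
    using u \<Omega>(1) by simp
  show "(\<lambda>x. v x * indicator \<Omega> x) \<in> borel_measurable M"
    using v \<Omega>(1) by simp
  show "(\<lambda>x. ennreal B * indicator \<Omega> x) \<in> borel_measurable M"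
    using \<Omega>(1) by simp
qed

lemma ennreal_le_epsilon_mult:
  fixes x y c :: ennreal
  assumes "c < \<infinity>" and le: "\<And>\<epsilon>. 0 < \<epsilon> \<Longrightarrow> \<epsilon> \<le> 1 \<Longrightarrow> x \<le> y + ennreal \<epsilon> * c"
  shows "x \<le> y"
proof (rule ennreal_le_epsilon)
  fix e :: real
  assume "0 < e"
  obtain m where m: "c = ennreal m" "0 \<le> m"
    using assms(1) by (cases c) auto
  define \<epsilon> where "\<epsilon> = min 1 (e / (m + 1))"
  have \<epsilon>: "0 < \<epsilon>" "\<epsilon> \<le> 1"
    using \<open>0 < e\<close> m(2) by (auto simp: \<epsilon>_def)
  have "\<epsilon> * m \<le> e / (m + 1) * m"
    using m(2) by (intro mult_right_mono) (auto simp: \<epsilon>_def)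
  also have "\<dots> \<le> e"
    using m(2) \<open>0 < e\<close> by (simp add: field_simps)
  finally have "ennreal \<epsilon> * c \<le> ennreal e"
    using m \<epsilon> by (simp add: ennreal_mult[symmetric] ennreal_leI)
  with le[OF \<epsilon>] show "x \<le> y + ennreal e"
    by (meson add_left_mono order_trans)
qed

lemma compact_continuous_ennreal_bounded:
  fixes f :: "'a::topological_space \<Rightarrow> ennreal"
  assumes "compact S" "continuous_on S f" "\<And>x. x \<in> S \<Longrightarrow> f x < \<infinity>"
  obtains B where "0 \<le> B" "\<And>x. x \<in> S \<Longrightarrow> f x \<le> ennreal B"
proof (cases "S = {}")
  case True
  then show ?thesis
    using that[of 0] by simp
next
  case False
  obtain x0 where "x0 \<in> S" "\<And>x. x \<in> S \<Longrightarrow> f x \<le> f x0"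
    using continuous_attains_sup[OF assms(1) False assms(2)] by blast
  moreover have "f x0 < \<infinity>"
    using assms(3) \<open>x0 \<in> S\<close> by blast
  ultimately show ?thesis
    using that[of "enn2real (f x0)"] by (simp add: ennreal_enn2real_if)
qed

lemma continuous_on_compact_le_SUP:
  fixes f :: "'a::topological_space \<Rightarrow> real"
  assumes "compact S" "continuous_on S f" "x \<in> S"
  shows "f x \<le> (SUP y\<in>S. f y)"
  using assms by (intro cSUP_upper bounded_imp_bdd_above compact_imp_bounded compact_continuous_image)

lemma bounded_sublevel_if_coercive:
  fixes W :: "'a::real_normed_vector \<Rightarrow> ennreal"
  assumes "0 < p" "0 < C" "\<And>F. ennreal (C * norm F powr p - 1 / C) \<le> W F"
  shows "bounded {F. W F \<le> ennreal c}"
proof -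
  define K where "K = (max 0 c + 1 / C) / C"
  have "norm F \<le> K powr (1 / p)" if "W F \<le> ennreal c" for F
  proof -
    have "ennreal (C * norm F powr p - 1 / C) \<le> ennreal (max 0 c)"
      using assms(3)[of F] that by (simp add: ennreal_max_0)
    then have "C * norm F powr p - 1 / C \<le> max 0 c"
      by (simp add: ennreal_le_iff)
    then have "norm F powr p \<le> K"
      using assms(2) by (simp add: K_def field_simps)
    then have "(norm F powr p) powr (1 / p) \<le> K powr (1 / p)"
      using assms(1) by (intro powr_mono2) auto
    then show ?thesis
      using assms(1) by (simp add: powr_powr)
  qed
  then show ?thesis
    unfolding bounded_iff by blast
qed

lemma sublevel_det_bounded_below:
  fixes W :: "real^'n^'n \<Rightarrow> ennreal"
  assumes "continuous_on UNIV W" "\<And>F. det F \<le> 0 \<Longrightarrow> W F = \<infinity>"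
    and "bounded {F. W F \<le> ennreal c}"
  obtains \<delta> where "\<delta> > 0" "\<And>F. W F \<le> ennreal c \<Longrightarrow> \<delta> \<le> det F"
proof -
  define S where "S = {F. W F \<le> ennreal c}"
  show ?thesis
  proof (cases "S = {}")
    case True
    then show ?thesis
      using that[of 1] by (auto simp: S_def)
  next
    case False
    have "closed S"
      unfolding S_def using assms(1) by (intro closed_Collect_le continuous_on_const)
    with assms(3) have "compact S"
      by (simp add: S_def compact_eq_bounded_closed)
    then obtain F0 where F0: "F0 \<in> S" "\<And>F. F \<in> S \<Longrightarrow> det F0 \<le> det F"
      using continuous_attains_inf[OF _ False continuous_on_det[OF continuous_on_id]] by blast
    have "W F0 \<le> ennreal c"
      using F0(1) by (simp add: S_def)
    then have "W F0 < \<infinity>"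
      using ennreal_less_top[of c] by (simp add: le_less_trans)
    then have "det F0 > 0"
      using assms(2)[of F0] by (cases "det F0 \<le> 0") auto
    with F0 show ?thesis
      using that[of "det F0"] unfolding S_def by blast
  qed
qed

lemma obtain_bound_on_det_ge:
  fixes W :: "real^'n^'n \<Rightarrow> ennreal"
  assumes "continuous_on UNIV W" "\<And>F. det F > 0 \<Longrightarrow> W F < \<infinity>" "\<delta> > 0"
  obtains B where "\<And>F. norm F \<le> r \<Longrightarrow> \<delta> \<le> det F \<Longrightarrow> W F \<le> ennreal B"
proof -
  define S :: "(real^'n^'n) set" where "S = cball 0 r \<inter> {F. \<delta> \<le> det F}"
  have "compact S"
    unfolding S_def by (intro compact_Int_closed compact_cball closed_Collect_le continuous_intros)
  moreover have "W F < \<infinity>" if "F \<in> S" for F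
    using that assms(3) unfolding S_def by (intro assms(2)) auto
  ultimately obtain B where B: "\<And>F. F \<in> S \<Longrightarrow> W F \<le> ennreal B"
    using compact_continuous_ennreal_bounded[of S W] continuous_on_subset[OF assms(1) subset_UNIV]
    by metis
  show ?thesis
  proof (rule that)
    fix F :: "real^'n^'n"
    assume "norm F \<le> r" "\<delta> \<le> det F"
    then show "W F \<le> ennreal B"
      using B by (simp add: S_def)
  qed
qed

lemma W0_le: "W0 W A \<le> W (augm A \<xi>)"
  unfolding W0_def by (rule INF_lower) simp

lemma W0_bounded:
  fixes W :: "real^3^3 \<Rightarrow> ennreal"
  assumes W: "continuous_on UNIV W" "\<And>F. det F > 0 \<Longrightarrow> W F < \<infinity>" and "\<eta> > 0"
  obtains K where "0 \<le> K" "\<And>A. norm A \<le> M \<Longrightarrow> \<eta> \<le> norm (cross_columns A) \<Longrightarrow> W0 W A \<le> ennreal K"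
proof -
  define S :: "(real^2^3) set" where "S = cball 0 M \<inter> {A. \<eta> \<le> norm (cross_columns A)}"
  have "compact S"
    unfolding S_def by (intro compact_Int_closed compact_cball closed_Collect_le continuous_intros)
  moreover have "continuous_on S (\<lambda>A. W (augm A (cross_columns A)))"
    by (rule continuous_on_compose2[OF W(1)]) (auto intro!: continuous_intros)
  moreover have "W (augm A (cross_columns A)) < \<infinity>" if "A \<in> S" for A
  proof (rule W(2))
    have "0 < norm (cross_columns A)"
      using that \<open>\<eta> > 0\<close> unfolding S_def by auto
    then show "0 < det (augm A (cross_columns A))"
      by (simp add: det_augm power2_norm_eq_inner[symmetric])
  qed
  ultimately obtain K where K: "0 \<le> K" "\<And>A. A \<in> S \<Longrightarrow> W (augm A (cross_columns A)) \<le> ennreal K"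
    using compact_continuous_ennreal_bounded by blast
  show ?thesis
  proof (rule that[OF K(1)])
    fix A :: "real^2^3"
    assume "norm A \<le> M" "\<eta> \<le> norm (cross_columns A)"
    then have "A \<in> S"
      by (simp add: S_def)
    then show "W0 W A \<le> ennreal K"
      by (rule order_trans[OF W0_le[of W A "cross_columns A"] K(2)])
  qed
qed

definition admissible :: "real \<Rightarrow> (real^2) set \<Rightarrow> (real^2 \<Rightarrow> real^2^3) \<Rightarrow> (real^2 \<Rightarrow> real^3) set" where
  "admissible \<beta> \<Omega> G = {\<phi>. smooth \<phi> \<and> (\<forall>x\<in>closure \<Omega>. det (augm (G x) (\<phi> x)) \<ge> 1 / \<beta>)
                                \<and> (\<forall>x\<in>closure \<Omega>. norm (\<phi> x) \<le> \<beta>)}"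

lemma obtain_admissible_approximation:
  fixes G :: "real^2 \<Rightarrow> real^2^3" and \<phi> :: "real^2 \<Rightarrow> real^3"
  assumes \<Omega>: "open \<Omega>" "bounded \<Omega>"
    and G: "continuous_on UNIV G" "\<And>x. x \<in> closure \<Omega> \<Longrightarrow> \<eta> \<le> norm (cross_columns (G x))"
    and \<phi>: "\<phi> \<in> borel_measurable borel"
      "\<And>x. x \<in> \<Omega> \<Longrightarrow> norm (\<phi> x) \<le> R" "\<And>x. x \<in> \<Omega> \<Longrightarrow> \<delta> \<le> det (augm (G x) (\<phi> x))"
    and pos: "\<eta> > 0" "R > 0" "\<delta> > 0"
    and \<beta>: "2 * R + \<delta> / \<eta> + 1 \<le> \<beta>" "2 / \<delta> \<le> \<beta>"
  obtains P where "\<And>k. polynomial_function (P k)" "\<And>k. P k \<in> admissible \<beta> \<Omega> G"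
    and "\<And>k x. x \<in> closure \<Omega> \<Longrightarrow> \<delta> / 2 \<le> det (augm (G x) (P k x))"
    and "AE x in lborel. x \<in> \<Omega> \<longrightarrow> (\<lambda>k. P k x) \<longlonglongrightarrow> \<phi> x"
proof -
  have "continuous_on (closure \<Omega>) (\<lambda>x. cross_columns (G x))"
    by (intro continuous_intros continuous_on_subset[OF G(1)]) simp
  moreover have "\<phi> \<in> borel_measurable lebesgue"
    using \<phi>(1) by (simp add: measurable_completion)
  ultimately obtain P where P: "\<And>k. polynomial_function (P k)"
    and P_det: "\<And>k x. x \<in> closure \<Omega> \<Longrightarrow> \<delta> / 2 \<le> det (augm (G x) (P k x))"
    and P_norm: "\<And>k x. x \<in> closure \<Omega> \<Longrightarrow> norm (P k x) \<le> 2 * R + \<delta> / \<eta> + 1"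
    and P_lim: "AE x in lborel. x \<in> \<Omega> \<longrightarrow> (\<lambda>k. P k x) \<longlonglongrightarrow> \<phi> x"
    using obtain_polynomial_approximation_in_halfspaces[of \<Omega> \<phi> "\<lambda>x. cross_columns (G x)" \<eta> R \<delta>]
      \<Omega> G(2) pos \<phi>(2,3) by (auto simp: det_augm)
  have "0 < \<beta>"
    using pos(3) \<beta>(2) divide_pos_pos[of 2 \<delta>] by linarith
  then have "1 / \<beta> \<le> \<delta> / 2"
    using pos(3) \<beta>(2) by (simp add: field_simps)
  have admissible: "P k \<in> admissible \<beta> \<Omega> G" for k
    unfolding admissible_def
  proof (intro CollectI conjI ballI polynomial_function_smooth P)
    fix x
    assume x: "x \<in> closure \<Omega>"
    show "1 / \<beta> \<le> det (augm (G x) (P k x))"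
      using P_det[OF x, of k] \<open>1 / \<beta> \<le> \<delta> / 2\<close> by linarith
    show "norm (P k x) \<le> \<beta>"
      using P_norm[OF x, of k] \<beta>(1) by linarith
  qed
  show ?thesis
    using P admissible P_det P_lim by (rule that)
qed

lemma INF_admissible_le_energy:
  fixes W :: "real^3^3 \<Rightarrow> ennreal" and G :: "real^2 \<Rightarrow> real^2^3" and \<phi> :: "real^2 \<Rightarrow> real^3"
  assumes W: "continuous_on UNIV W" "\<And>F. det F > 0 \<Longrightarrow> W F < \<infinity>"
    and \<Omega>: "open \<Omega>" "bounded \<Omega>"
    and G: "continuous_on UNIV G" "\<And>x. x \<in> closure \<Omega> \<Longrightarrow> norm (G x) \<le> M"
      "\<And>x. x \<in> closure \<Omega> \<Longrightarrow> \<eta> \<le> norm (cross_columns (G x))"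
    and \<phi>: "\<phi> \<in> borel_measurable borel" "(\<lambda>x. W (augm (G x) (\<phi> x))) \<in> borel_measurable borel"
      "\<And>x. x \<in> \<Omega> \<Longrightarrow> norm (\<phi> x) \<le> R" "\<And>x. x \<in> \<Omega> \<Longrightarrow> \<delta> \<le> det (augm (G x) (\<phi> x))"
    and pos: "\<eta> > 0" "R > 0" "\<delta> > 0"
    and \<beta>: "2 * R + \<delta> / \<eta> + 1 \<le> \<beta>" "2 / \<delta> \<le> \<beta>"
  shows "(INF \<psi>\<in>admissible \<beta> \<Omega> G. \<integral>\<^sup>+ x. W (augm (G x) (\<psi> x)) * indicator \<Omega> x \<partial>lborel)
    \<le> (\<integral>\<^sup>+ x. W (augm (G x) (\<phi> x)) * indicator \<Omega> x \<partial>lborel)"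
proof -
  obtain P where P: "\<And>k. polynomial_function (P k)" "\<And>k. P k \<in> admissible \<beta> \<Omega> G"
    and P_det: "\<And>k x. x \<in> closure \<Omega> \<Longrightarrow> \<delta> / 2 \<le> det (augm (G x) (P k x))"
    and P_lim: "AE x in lborel. x \<in> \<Omega> \<longrightarrow> (\<lambda>k. P k x) \<longlonglongrightarrow> \<phi> x"
    using obtain_admissible_approximation[OF \<Omega> G(1,3) \<phi>(1,3,4) pos \<beta>] by auto
  obtain B where B: "\<And>F. norm F \<le> M + \<beta> \<Longrightarrow> \<delta> / 2 \<le> det F \<Longrightarrow> W F \<le> ennreal B"
    using obtain_bound_on_det_ge[of W "\<delta> / 2" "M + \<beta>"] W pos(3) by auto
  have bound: "W (augm (G x) (P k x)) \<le> ennreal B" if "x \<in> \<Omega>" for k x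
  proof (rule B)
    have x: "x \<in> closure \<Omega>"
      using that closure_subset by blast
    then show "norm (augm (G x) (P k x)) \<le> M + \<beta>"
      using norm_augm_le[of "G x" "P k x"] G(2)[OF x] P(2)[of k]
      unfolding admissible_def by fastforce
    show "\<delta> / 2 \<le> det (augm (G x) (P k x))"
      by (rule P_det[OF x])
  qed
  have W_G: "continuous_on UNIV (\<lambda>x. W (augm (G x) (f x)))" if "continuous_on UNIV f" for f
    by (rule continuous_on_compose2[OF W(1)]) (auto intro!: continuous_intros G(1) that)
  have "(\<lambda>k. \<integral>\<^sup>+ x. W (augm (G x) (P k x)) * indicator \<Omega> x \<partial>lborel)
      \<longlonglongrightarrow> (\<integral>\<^sup>+ x. W (augm (G x) (\<phi> x)) * indicator \<Omega> x \<partial>lborel)"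
  proof (rule nn_integral_indicator_bounded_convergence)
    show "\<Omega> \<in> sets lborel"
      using \<Omega>(1) by simp
    show "emeasure lborel \<Omega> < \<infinity>"
      by (rule emeasure_bounded_finite[OF \<Omega>(2)])
    show "(\<lambda>x. W (augm (G x) (P k x))) \<in> borel_measurable lborel" for k
      using W_G[OF continuous_on_polymonial_function[OF P(1)]]
      by (simp add: borel_measurable_continuous_onI)
    show "(\<lambda>x. W (augm (G x) (\<phi> x))) \<in> borel_measurable lborel"
      using \<phi>(2) by simp
    show "AE x in lborel. x \<in> \<Omega> \<longrightarrow> (\<lambda>k. W (augm (G x) (P k x))) \<longlonglongrightarrow> W (augm (G x) (\<phi> x))"
      using P_lim
    proof eventually_elim
      case (elim x)
      have "continuous_on UNIV (\<lambda>\<xi>. W (augm (G x) \<xi>))"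
        by (rule continuous_on_compose2[OF W(1)]) (auto intro!: continuous_intros)
      with elim show ?case
        by (auto intro: continuous_on_tendsto_compose)
    qed
  qed (rule bound)
  then show ?thesis
    by (rule LIMSEQ_le_const) (auto intro: INF_lower P(2))
qed

lemma obtain_almost_minimizing_field:
  fixes W :: "real^3^3 \<Rightarrow> ennreal" and G :: "real^2 \<Rightarrow> real^2^3"
  assumes W: "continuous_on UNIV W" and G: "continuous_on UNIV G"
    and K: "0 \<le> K" "\<And>x. x \<in> S \<Longrightarrow> W0 W (G x) \<le> ennreal K"
    and sublevel: "\<And>F. W F \<le> ennreal (K + 1) \<Longrightarrow> norm F \<le> R \<and> \<delta> \<le> det F"
    and \<epsilon>: "0 < \<epsilon>" "\<epsilon> \<le> 1"
  obtains \<phi> where "\<phi> \<in> borel_measurable borel" "(\<lambda>x. W (augm (G x) (\<phi> x))) \<in> borel_measurable borel"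
    and "\<And>x. x \<in> S \<Longrightarrow> W (augm (G x) (\<phi> x)) < W0 W (G x) + ennreal \<epsilon>"
    and "\<And>x. x \<in> S \<Longrightarrow> norm (\<phi> x) \<le> R" "\<And>x. x \<in> S \<Longrightarrow> \<delta> \<le> det (augm (G x) (\<phi> x))"
proof -
  define f where "f x \<xi> = W (augm (G x) \<xi>)" for x \<xi>
  have f_continuous: "continuous_on UNIV (f x)" for x
    unfolding f_def by (rule continuous_on_compose2[OF W]) (auto intro!: continuous_intros)
  have f_measurable: "(\<lambda>x. f x \<xi>) \<in> borel_measurable borel" for \<xi>
    unfolding f_def
    by (intro borel_measurable_continuous_onI continuous_on_compose2[OF W])
      (auto intro!: continuous_intros G)
  obtain \<phi> where \<phi>: "\<phi> \<in> borel_measurable borel" "(\<lambda>x. f x (\<phi> x)) \<in> borel_measurable borel"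
    and almost_min: "\<And>x. (INF \<xi>. f x \<xi>) < \<infinity> \<Longrightarrow> f x (\<phi> x) < (INF \<xi>. f x \<xi>) + ennreal \<epsilon>"
    using obtain_measurable_almost_minimizer[of f borel, OF f_measurable f_continuous \<epsilon>(1)] by auto
  have \<phi>_W: "W (augm (G x) (\<phi> x)) < W0 W (G x) + ennreal \<epsilon>" if "x \<in> S" for x
    using almost_min[of x] K(2)[OF that] unfolding W0_def f_def by (simp add: le_less_trans)
  have \<phi>_sublevel: "norm (\<phi> x) \<le> R \<and> \<delta> \<le> det (augm (G x) (\<phi> x))" if "x \<in> S" for x
  proof -
    have "W (augm (G x) (\<phi> x)) \<le> W0 W (G x) + ennreal \<epsilon>"
      using \<phi>_W[OF that] by simp
    also have "\<dots> \<le> ennreal K + ennreal 1"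
      using K(2)[OF that] \<epsilon>(2) by (intro add_mono) auto
    also have "\<dots> = ennreal (K + 1)"
      using K(1) by simp
    finally have "norm (augm (G x) (\<phi> x)) \<le> R \<and> \<delta> \<le> det (augm (G x) (\<phi> x))"
      by (rule sublevel)
    then show ?thesis
      using norm_le_norm_augm[of "\<phi> x" "G x"] by linarith
  qed
  show ?thesis
    using that[of \<phi>] \<phi> \<phi>_W \<phi>_sublevel unfolding f_def by blast
qed

lemma borel_measurable_W0:
  assumes "continuous_on UNIV W" "continuous_on UNIV G"
  shows "(\<lambda>x. W0 W (G x)) \<in> borel_measurable borel"
proof -
  have "(\<lambda>x. W (augm (G x) \<xi>)) \<in> borel_measurable borel" for \<xi>
    by (intro borel_measurable_continuous_onI continuous_on_compose2[OF assms(1)])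
      (auto intro!: continuous_intros assms(2))
  moreover have "continuous_on UNIV (\<lambda>\<xi>. W (augm (G x) \<xi>))" for x
    by (rule continuous_on_compose2[OF assms(1)]) (auto intro!: continuous_intros)
  ultimately show ?thesis
    unfolding W0_def by (rule borel_measurable_INF_continuous[of "\<lambda>x \<xi>. W (augm (G x) \<xi>)"])
qed

lemma INF_admissible_le_relaxed_energy:
  fixes W :: "real^3^3 \<Rightarrow> ennreal" and G :: "real^2 \<Rightarrow> real^2^3"
  assumes W: "continuous_on UNIV W" "\<And>F. det F > 0 \<Longrightarrow> W F < \<infinity>"
    and \<Omega>: "open \<Omega>" "bounded \<Omega>"
    and G: "continuous_on UNIV G" "\<And>x. x \<in> closure \<Omega> \<Longrightarrow> norm (G x) \<le> M"
      "\<And>x. x \<in> closure \<Omega> \<Longrightarrow> \<eta> \<le> norm (cross_columns (G x))"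
    and K: "0 \<le> K" "\<And>A. norm A \<le> M \<Longrightarrow> \<eta> \<le> norm (cross_columns A) \<Longrightarrow> W0 W A \<le> ennreal K"
    and sublevel: "\<And>F. W F \<le> ennreal (K + 1) \<Longrightarrow> norm F \<le> R \<and> \<delta> \<le> det F"
    and pos: "\<eta> > 0" "R > 0" "\<delta> > 0"
    and \<beta>: "2 * R + \<delta> / \<eta> + 1 \<le> \<beta>" "2 / \<delta> \<le> \<beta>"
  shows "(INF \<psi>\<in>admissible \<beta> \<Omega> G. \<integral>\<^sup>+ x. W (augm (G x) (\<psi> x)) * indicator \<Omega> x \<partial>lborel)
    \<le> (\<integral>\<^sup>+ x. W0 W (G x) * indicator \<Omega> x \<partial>lborel)"
proof (rule ennreal_le_epsilon_mult)
  show "emeasure lborel \<Omega> < \<infinity>"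
    by (rule emeasure_bounded_finite[OF \<Omega>(2)])
  fix \<epsilon> :: real
  assume \<epsilon>: "0 < \<epsilon>" "\<epsilon> \<le> 1"
  have "W0 W (G x) \<le> ennreal K" if "x \<in> closure \<Omega>" for x
    by (rule K(2)[OF G(2,3)[OF that]])
  then obtain \<phi> where \<phi>: "\<phi> \<in> borel_measurable borel" "(\<lambda>x. W (augm (G x) (\<phi> x))) \<in> borel_measurable borel"
    and \<phi>_W: "\<And>x. x \<in> closure \<Omega> \<Longrightarrow> W (augm (G x) (\<phi> x)) < W0 W (G x) + ennreal \<epsilon>"
    and \<phi>_bounds: "\<And>x. x \<in> closure \<Omega> \<Longrightarrow> norm (\<phi> x) \<le> R"
      "\<And>x. x \<in> closure \<Omega> \<Longrightarrow> \<delta> \<le> det (augm (G x) (\<phi> x))"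
    using obtain_almost_minimizing_field[where S = "closure \<Omega>", OF W(1) G(1) K(1) _ sublevel \<epsilon>]
    by blast
  have "(INF \<psi>\<in>admissible \<beta> \<Omega> G. \<integral>\<^sup>+ x. W (augm (G x) (\<psi> x)) * indicator \<Omega> x \<partial>lborel)
      \<le> (\<integral>\<^sup>+ x. W (augm (G x) (\<phi> x)) * indicator \<Omega> x \<partial>lborel)"
    using \<phi> \<phi>_bounds closure_subset
    by (intro INF_admissible_le_energy[OF W \<Omega> G _ _ _ _ pos \<beta>]) auto
  also have "\<dots> \<le> (\<integral>\<^sup>+ x. W0 W (G x) * indicator \<Omega> x + ennreal \<epsilon> * indicator \<Omega> x \<partial>lborel)"
  proof (rule nn_integral_mono)
    fix x
    show "W (augm (G x) (\<phi> x)) * indicator \<Omega> x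
        \<le> W0 W (G x) * indicator \<Omega> x + ennreal \<epsilon> * indicator \<Omega> x"
      using \<phi>_W[OF closure_subset[THEN subsetD]] by (cases "x \<in> \<Omega>") (auto intro: less_imp_le)
  qed
  also have "\<dots> = (\<integral>\<^sup>+ x. W0 W (G x) * indicator \<Omega> x \<partial>lborel) + ennreal \<epsilon> * emeasure lborel \<Omega>"
    using borel_measurable_W0[OF W(1) G(1)] \<Omega>(1)
    by (simp add: nn_integral_add nn_integral_cmult_indicator)
  finally show "(INF \<psi>\<in>admissible \<beta> \<Omega> G. \<integral>\<^sup>+ x. W (augm (G x) (\<psi> x)) * indicator \<Omega> x \<partial>lborel)
      \<le> (\<integral>\<^sup>+ x. W0 W (G x) * indicator \<Omega> x \<partial>lborel) + ennreal \<epsilon> * emeasure lborel \<Omega>" .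
qed

lemma relaxed_energy_eq_INF_admissible:
  fixes W :: "real^3^3 \<Rightarrow> ennreal" and G :: "real^2 \<Rightarrow> real^2^3"
  assumes W: "continuous_on UNIV W" "\<And>F. det F > 0 \<Longrightarrow> W F < \<infinity>"
    and \<Omega>: "open \<Omega>" "bounded \<Omega>"
    and G: "continuous_on (closure \<Omega>) G" "\<And>x. x \<in> closure \<Omega> \<Longrightarrow> norm (G x) \<le> M"
      "\<And>x. x \<in> closure \<Omega> \<Longrightarrow> \<eta> \<le> norm (cross_columns (G x))"
    and K: "0 \<le> K" "\<And>A. norm A \<le> M \<Longrightarrow> \<eta> \<le> norm (cross_columns A) \<Longrightarrow> W0 W A \<le> ennreal K"
    and sublevel: "\<And>F. W F \<le> ennreal (K + 1) \<Longrightarrow> norm F \<le> R \<and> \<delta> \<le> det F"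
    and pos: "\<eta> > 0" "R > 0" "\<delta> > 0"
    and \<beta>: "2 * R + \<delta> / \<eta> + 1 \<le> \<beta>" "2 / \<delta> \<le> \<beta>"
  shows "(\<integral>\<^sup>+ x. W0 W (G x) * indicator \<Omega> x \<partial>lborel)
    = (INF \<psi>\<in>admissible \<beta> \<Omega> G. \<integral>\<^sup>+ x. W (augm (G x) (\<psi> x)) * indicator \<Omega> x \<partial>lborel)"
proof (rule antisym)
  show "(\<integral>\<^sup>+ x. W0 W (G x) * indicator \<Omega> x \<partial>lborel)
    \<le> (INF \<psi>\<in>admissible \<beta> \<Omega> G. \<integral>\<^sup>+ x. W (augm (G x) (\<psi> x)) * indicator \<Omega> x \<partial>lborel)"
    by (intro INF_greatest nn_integral_mono mult_right_mono W0_le) simp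
  obtain G' where G': "continuous_on UNIV G'" "\<And>x. x \<in> closure \<Omega> \<Longrightarrow> G' x = G x"
    using Tietze_unbounded[OF G(1), of UNIV] by auto
  have on_\<Omega>: "x \<in> \<Omega> \<Longrightarrow> G' x = G x" for x
    using G'(2) closure_subset by blast
  have "(INF \<psi>\<in>admissible \<beta> \<Omega> G'. \<integral>\<^sup>+ x. W (augm (G' x) (\<psi> x)) * indicator \<Omega> x \<partial>lborel)
      \<le> (\<integral>\<^sup>+ x. W0 W (G' x) * indicator \<Omega> x \<partial>lborel)"
    using G' G(2,3) by (intro INF_admissible_le_relaxed_energy[OF W \<Omega> _ _ _ K sublevel pos \<beta>]) auto
  moreover have "admissible \<beta> \<Omega> G' = admissible \<beta> \<Omega> G"
    by (simp add: admissible_def G'(2))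
  moreover have "(\<integral>\<^sup>+ x. W (augm (G' x) (\<psi> x)) * indicator \<Omega> x \<partial>lborel)
      = (\<integral>\<^sup>+ x. W (augm (G x) (\<psi> x)) * indicator \<Omega> x \<partial>lborel)" for \<psi>
    using on_\<Omega> by (intro nn_integral_cong) (simp split: split_indicator)
  moreover have "(\<integral>\<^sup>+ x. W0 W (G' x) * indicator \<Omega> x \<partial>lborel) = (\<integral>\<^sup>+ x. W0 W (G x) * indicator \<Omega> x \<partial>lborel)"
    using on_\<Omega> by (intro nn_integral_cong) (simp split: split_indicator)
  ultimately show "(INF \<psi>\<in>admissible \<beta> \<Omega> G. \<integral>\<^sup>+ x. W (augm (G x) (\<psi> x)) * indicator \<Omega> x \<partial>lborel)
    \<le> (\<integral>\<^sup>+ x. W0 W (G x) * indicator \<Omega> x \<partial>lborel)"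
    by simp
qed

lemma relaxation_formula:
  fixes W :: "real^3^3 \<Rightarrow> ennreal" and p :: real
  assumes p: "0 < p"
    and W: "continuous_on UNIV W" "\<And>F. det F > 0 \<Longrightarrow> W F < \<infinity>" "\<And>F. det F \<le> 0 \<Longrightarrow> W F = \<infinity>"
    and coercive: "\<exists>C>0. \<forall>F. W F \<ge> ennreal (C * norm F powr p - 1 / C)"
  shows "\<forall>\<eta>>0. \<forall>M. \<exists>\<beta>>0. \<forall>(\<Omega>::(real^2) set) (G::real^2 \<Rightarrow> real^2^3).
           open \<Omega> \<and> bounded \<Omega> \<and> uniformly_continuous_on (closure \<Omega>) G
           \<and> (\<forall>x\<in>closure \<Omega>. norm (cross_columns (G x)) \<ge> \<eta>)
           \<and> (SUP x\<in>closure \<Omega>. norm (G x)) = M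
         \<longrightarrow> (\<integral>\<^sup>+ x. W0 W (G x) * indicator \<Omega> x \<partial>lborel)
             = (INF \<psi>\<in>admissible \<beta> \<Omega> G. \<integral>\<^sup>+ x. W (augm (G x) (\<psi> x)) * indicator \<Omega> x \<partial>lborel)"
proof (intro allI impI)
  fix \<eta> M :: real
  assume \<eta>: "\<eta> > 0"
  obtain K where K: "0 \<le> K" "\<And>A. norm A \<le> M \<Longrightarrow> \<eta> \<le> norm (cross_columns A) \<Longrightarrow> W0 W A \<le> ennreal K"
    using W0_bounded[where M = M] W(1,2) \<eta> by blast
  obtain C where C: "C > 0" "\<And>F. ennreal (C * norm F powr p - 1 / C) \<le> W F"
    using coercive by auto
  have sublevel_bounded: "bounded {F. W F \<le> ennreal (K + 1)}"
    using p C by (intro bounded_sublevel_if_coercive[of p C]) auto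
  then obtain R where R: "R > 0" "\<And>F. W F \<le> ennreal (K + 1) \<Longrightarrow> norm F \<le> R"
    unfolding bounded_pos by auto
  obtain \<delta> where \<delta>: "\<delta> > 0" "\<And>F. W F \<le> ennreal (K + 1) \<Longrightarrow> \<delta> \<le> det F"
    using sublevel_det_bounded_below[OF W(1) _ sublevel_bounded] W(3) by blast
  \<comment> \<open>Approximants of an \<open>\<epsilon>\<close>-minimiser have norm \<open>\<le> 2R + \<delta>/\<eta> + 1\<close> and determinant \<open>\<ge> \<delta>/2\<close>.\<close>
  define \<beta> where "\<beta> = max (2 * R + \<delta> / \<eta> + 1) (2 / \<delta>)"
  show "\<exists>\<beta>>0. \<forall>\<Omega> G. open \<Omega> \<and> bounded \<Omega> \<and> uniformly_continuous_on (closure \<Omega>) G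
           \<and> (\<forall>x\<in>closure \<Omega>. norm (cross_columns (G x)) \<ge> \<eta>) \<and> (SUP x\<in>closure \<Omega>. norm (G x)) = M
         \<longrightarrow> (\<integral>\<^sup>+ x. W0 W (G x) * indicator \<Omega> x \<partial>lborel)
             = (INF \<psi>\<in>admissible \<beta> \<Omega> G. \<integral>\<^sup>+ x. W (augm (G x) (\<psi> x)) * indicator \<Omega> x \<partial>lborel)"
  proof (intro exI[of _ \<beta>] conjI allI impI)
    show "\<beta> > 0"
      using \<delta>(1) by (simp add: \<beta>_def less_max_iff_disj)
    fix \<Omega> :: "(real^2) set" and G :: "real^2 \<Rightarrow> real^2^3"
    assume hyps: "open \<Omega> \<and> bounded \<Omega> \<and> uniformly_continuous_on (closure \<Omega>) G
      \<and> (\<forall>x\<in>closure \<Omega>. norm (cross_columns (G x)) \<ge> \<eta>) \<and> (SUP x\<in>closure \<Omega>. norm (G x)) = M"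
    then have G: "continuous_on (closure \<Omega>) G"
      by (auto intro: uniformly_continuous_imp_continuous)
    have "norm (G x) \<le> M" if "x \<in> closure \<Omega>" for x
      using continuous_on_compact_le_SUP[of "closure \<Omega>" "\<lambda>x. norm (G x)" x] hyps G that
      by (auto intro: continuous_on_norm simp: compact_closure)
    with hyps G show "(\<integral>\<^sup>+ x. W0 W (G x) * indicator \<Omega> x \<partial>lborel)
      = (INF \<psi>\<in>admissible \<beta> \<Omega> G. \<integral>\<^sup>+ x. W (augm (G x) (\<psi> x)) * indicator \<Omega> x \<partial>lborel)"
      by (intro relaxed_energy_eq_INF_admissible[where K = K and R = R and \<delta> = \<delta> and \<eta> = \<eta>])
        (use W K R \<delta> \<eta> in \<open>auto simp: \<beta>_def\<close>)
  qed
qed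

theorem corollary4p8:
  fixes W :: "real^3^3 \<Rightarrow> ennreal" and p :: real
  assumes p: "1 < p"
    and H1: "continuous_on UNIV W"
    and H2: "\<And>R F. rotation_matrix R \<Longrightarrow> W (R ** F) = W F"
    and H3a: "\<And>F. det F > 0 \<Longrightarrow> W F < \<infinity>"
    and H3b: "\<And>F. det F \<le> 0 \<Longrightarrow> W F = \<infinity>"
    and H4: "\<exists>C1>0. \<forall>F. W F \<ge> ennreal (C1 * norm F powr p - 1 / C1)"
    and H5: "\<And>\<delta>. \<delta> > 0 \<Longrightarrow> \<exists>c. \<forall>F. det F \<ge> \<delta> \<longrightarrow> W F \<le> ennreal (c * (1 + norm F powr p))"
  shows "\<forall>\<eta>>0. \<forall>M. \<exists>\<beta>>0. \<forall>(\<Omega>::(real^2) set) (G::real^2 \<Rightarrow> real^2^3).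
           open \<Omega> \<and> bounded \<Omega> \<and> uniformly_continuous_on (closure \<Omega>) G
           \<and> (\<forall>x\<in>closure \<Omega>. norm (cross3 (column 1 (G x)) (column 2 (G x))) \<ge> \<eta>)
           \<and> (SUP x\<in>closure \<Omega>. norm (G x)) = M
         \<longrightarrow> (\<integral>\<^sup>+ x. W0 W (G x) * indicator \<Omega> x \<partial>lborel)
             = (INF \<phi>\<in>{\<phi>. smooth \<phi> \<and> (\<forall>x\<in>closure \<Omega>. det (augm (G x) (\<phi> x)) \<ge> 1 / \<beta>)
                            \<and> (\<forall>x\<in>closure \<Omega>. norm (\<phi> x) \<le> \<beta>)}.
                  (\<integral>\<^sup>+ x. W (augm (G x) (\<phi> x)) * indicator \<Omega> x \<partial>lborel))"
  using p H1 H3a H3b H4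
  by (intro relaxation_formula[unfolded admissible_def cross_columns_def]) auto

end
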